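(* Let $q\ge 2$ be a prime power and let $\alpha,\beta$ be vertices of $\Gamma_q$ with $d_{\Gamma_q}(\alpha,\beta)=3$. Then $A=N^2_{\Gamma_q}[\alpha]\cup N^2_{\Gamma_q}[\beta]$ is a perfect dominating set of $\Gamma_q$ and $|A|=2(q+1)^2$.
   Context: Let $q\ge 2$ be a prime power and $\mathbb{F}_q$ the field with $q$ elements; in the vertex labels below the symbol $q$ is also used as an extra formal symbol not belonging to $\mathbb{F}_q$, and all arithmetic is in $\mathbb{F}_q$. $\Gamma_q$ is the bipartite graph with parts $V_0,V_1$, where for $r\in\{0,1\}$ the set $V_r$ consists of the vertices $(a,b,c)_r$ with $a\in\mathbb{F}_q\cup\{q\}$, $b,c\in\mathbb{F}_q$, together with the vertices $(q,q,a)_r$ with $a\in\mathbb{F}_q\cup\{q\}$. The edges are given by: for $a,b,c\in\mathbb{F}_q$, $N((a,b,c)_1)=\{(x,\,ax+b,\,a^2x+2ab+c)_0: x\in\mathbb{F}_q\}\cup\{(q,a,c)_0\}$; for $b,c\in\mathbb{F}_q$, $N((q,b,c)_1)=\{(c,b,x)_0: x\in\mathbb{F}_q\}\cup\{(q,q,c)_0\}$; for $a\in\mathbb{F}_q\cup\{q\}$, $N((q,q,a)_1)=\{(q,a,x)_0: x\in\mathbb{F}_q\}\cup\{(q,q,q)_0\}$. There are no other edges. For a graph $G$, $d_G$ is the distance, $N^t_G(u)=\{x: d_G(u,x)=t\}$, $N^t_G[u]=\{x: d_G(u,x)\le t\}$, $N_G[u]=N^1_G[u]$. A set $U\subseteq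 V(G)$ is a perfect dominating set of $G$ if every vertex $x\in V(G)\setminus U$ has exactly one neighbour in $U$. *)

theory Defs
  imports Main "HOL-Library.Extended_Nat"
begin

inductive walk :: "'v set \<Rightarrow> ('v \<Rightarrow> 'v \<Rightarrow> bool) \<Rightarrow> nat \<Rightarrow> 'v \<Rightarrow> 'v \<Rightarrow> bool"
  for V E where
  walk0: "u \<in> V \<Longrightarrow> walk V E 0 u u"
| walkS: "walk V E n u v \<Longrightarrow> w \<in> V \<Longrightarrow> E v w \<Longrightarrow> walk V E (Suc n) u w"

text \<open>Graph distance (infinity if no walk exists).\<close>
definition gdist :: "'v set \<Rightarrow> ('v \<Rightarrow> 'v \<Rightarrow> bool) \<Rightarrow> 'v \<Rightarrow> 'v \<Rightarrow> enat" where
  "gdist V E u x = (INF n \<in> {n. walk V E n u x}. enat n)"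

definition closed_nbhd :: "'v set \<Rightarrow> ('v \<Rightarrow> 'v \<Rightarrow> bool) \<Rightarrow> nat \<Rightarrow> 'v \<Rightarrow> 'v set" where
  "closed_nbhd V E t u = {x \<in> V. gdist V E u x \<le> enat t}"

definition perfect_dominating :: "'v set \<Rightarrow> ('v \<Rightarrow> 'v \<Rightarrow> bool) \<Rightarrow> 'v set \<Rightarrow> bool" where
  "perfect_dominating V E U \<longleftrightarrow> U \<subseteq> V \<and> (\<forall>x \<in> V - U. card {y \<in> U. E x y} = 1)"

text \<open>Labels (a,b,c): each coordinate is in F_q \<union> {q}; None encodes the formal symbol q.\<close>
type_synonym 'a label = "'a option \<times> 'a option \<times> 'a option"

text \<open>A vertex is a label together with its side r (False = V_0, True = V_1).\<close>
type_synonym 'a gvertex = "'a label \<times> bool"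

definition labels :: "('a::{finite,field}) label set" where
  "labels = {(a, Some b, Some c) | a b c. True} \<union> {(None, None, a) | a. True}"

definition gverts :: "('a::{finite,field}) gvertex set" where
  "gverts = labels \<times> UNIV"

text \<open>Neighbourhood (in V_0) of a vertex of V_1, given by its label.\<close>
definition N1 :: "('a::{finite,field}) label \<Rightarrow> 'a label set" where
  "N1 v = (case v of
      (Some a, Some b, Some c) \<Rightarrow>
         {(Some x, Some (a * x + b), Some (a^2 * x + 2 * a * b + c)) | x. True} \<union> {(None, Some a, Some c)}
    | (None, Some b, Some c) \<Rightarrow> {(Some c, Some b, Some x) | x. True} \<union> {(None, None, Some c)}
    | (None, None, a) \<Rightarrow> {(None, a, Some x) | x. True} \<union> {(None, None, None)}
    | _ \<Rightarrow> {})"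

definition gadj :: "('a::{finite,field}) gvertex \<Rightarrow> 'a gvertex \<Rightarrow> bool" where
  "gadj u v \<longleftrightarrow> u \<in> gverts \<and> v \<in> gverts \<and>
     ((snd u \<and> \<not> snd v \<and> fst v \<in> N1 (fst u)) \<or> (snd v \<and> \<not> snd u \<and> fst u \<in> N1 (fst v)))"

end

theory Submission
  imports Defs "HOL-Library.Cardinality"
begin

(* Gamma_q is the incidence graph of a generalized quadrangle of order (q,q):
   it is bipartite and (q+1)-regular, two distinct vertices have at most one common
   neighbour, and a vertex not adjacent to a vertex of the opposite side is joined to it by
   exactly one path of length 3 (a point off a line is collinear with a unique point of it).

   It then verifies the axioms for Gamma_q by computations with the labels: neighbourhoods
   have q+1 elements, two lines meet in at most one point, and every point off a line has a
   "projection" onto it.  Uniqueness of the projection is obtained by counting: the chains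
   (point on l, other line through it, other point on that line) are exactly as many as the
   points off l, and every such point is reached. *)


lemma gdist_le_iff: "gdist V E u x \<le> enat t \<longleftrightarrow> (\<exists>n\<le>t. walk V E n u x)"
proof
  assume "\<exists>n\<le>t. walk V E n u x"
  then obtain n where "n \<le> t" "walk V E n u x" by blast
  then have "gdist V E u x \<le> enat n" unfolding gdist_def by (auto intro: INF_lower)
  also have "\<dots> \<le> enat t" using \<open>n \<le> t\<close> by simp
  finally show "gdist V E u x \<le> enat t" .
next
  assume le: "gdist V E u x \<le> enat t"
  show "\<exists>n\<le>t. walk V E n u x"
  proof (rule ccontr)
    assume "\<not> (\<exists>n\<le>t. walk V E n u x)"
    then have "\<forall>n \<in> {n. walk V E n u x}. enat (Suc t) \<le> enat n" using not_less_eq_eq by auto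
    then have "enat (Suc t) \<le> gdist V E u x" unfolding gdist_def by (auto intro!: INF_greatest)
    then have "enat (Suc t) \<le> enat t" using le by (rule order_trans)
    then show False by simp
  qed
qed

locale gq_incidence_graph =
  fixes V :: "'v set" and E :: "'v \<Rightarrow> 'v \<Rightarrow> bool" and side :: "'v \<Rightarrow> bool" and s :: nat
  assumes finite_V: "finite V"
    and adj_in_V: "E u v \<Longrightarrow> u \<in> V \<and> v \<in> V"
    and adj_sym: "E u v \<Longrightarrow> E v u"
    and adj_sides: "E u v \<Longrightarrow> side u \<noteq> side v"
    and degree: "u \<in> V \<Longrightarrow> card {v. E u v} = Suc s"
    and common_nbr_unique: "E u w \<Longrightarrow> E w v \<Longrightarrow> E u w' \<Longrightarrow> E w' v \<Longrightarrow> u \<noteq> v \<Longrightarrow> w = w'"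
    and path3_exists: "u \<in> V \<Longrightarrow> v \<in> V \<Longrightarrow> side u \<noteq> side v \<Longrightarrow> \<not> E u v \<Longrightarrow>
       \<exists>w m. E u w \<and> E w m \<and> E m v"
    and path3_unique: "E u w \<Longrightarrow> E w m \<Longrightarrow> E m v \<Longrightarrow> E u w' \<Longrightarrow> E w' m' \<Longrightarrow> E m' v \<Longrightarrow>
       \<not> E u v \<Longrightarrow> w = w' \<and> m = m'"
begin

lemma walk_0_iff: "walk V E 0 u v \<longleftrightarrow> u = v \<and> u \<in> V"
  by (auto elim: walk.cases intro: walk.intros)

lemma walk_Suc_iff: "walk V E (Suc n) u w \<longleftrightarrow> (\<exists>v. walk V E n u v \<and> E v w)"
  by (auto elim: walk.cases intro: walk.intros dest: adj_in_V)

definition ball2 :: "'v \<Rightarrow> 'v set" where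
  "ball2 u = {u} \<union> {x. E u x} \<union> {x. \<exists>w. E u w \<and> E w x}"

lemma ball2_subset_V: "u \<in> V \<Longrightarrow> ball2 u \<subseteq> V"
  unfolding ball2_def by (auto dest: adj_in_V)

lemma finite_ball2: "u \<in> V \<Longrightarrow> finite (ball2 u)"
  using ball2_subset_V finite_V finite_subset by blast

lemma closed_nbhd_2: assumes u: "u \<in> V" shows "closed_nbhd V E 2 u = ball2 u"
proof -
  have "(\<exists>n\<le>2. walk V E n u x) \<longleftrightarrow> walk V E 0 u x \<or> walk V E 1 u x \<or> walk V E 2 u x" for x
    by (auto simp: le_Suc_eq numeral_2_eq_2)
  also have "\<dots> x \<longleftrightarrow> x \<in> ball2 u" for x
    using u by (auto simp: ball2_def numeral_2_eq_2 walk_Suc_iff walk_0_iff)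
  finally show ?thesis
    using ball2_subset_V[OF u] unfolding closed_nbhd_def gdist_le_iff by auto
qed

lemma ball2_sym: "x \<in> ball2 u \<longleftrightarrow> u \<in> ball2 x"
  unfolding ball2_def by (auto intro: adj_sym)

lemma ball2_same_side: "x \<in> ball2 u \<Longrightarrow> side x = side u \<Longrightarrow> x = u \<or> (\<exists>w. E u w \<and> E w x)"
  unfolding ball2_def using adj_sides by fastforce

lemma ball2_other_side: "x \<in> ball2 u \<Longrightarrow> side x \<noteq> side u \<Longrightarrow> E u x"
  unfolding ball2_def using adj_sides by fastforce

(* |N^2[u]| = 1 + (s+1) + (s+1)s: the 2-paths from u end in pairwise distinct vertices
   because distinct vertices have at most one common neighbour. *)
lemma card_ball2: assumes u: "u \<in> V" shows "card (ball2 u) = (Suc s)\<^sup>2 + 1"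
proof -
  let ?N = "{x. E u x}"
  let ?M = "\<Union>w\<in>?N. {x. E w x} - {u}"
  have finite_nbrs: "finite {x. E w x}" for w
    using finite_V by (rule rev_finite_subset) (auto dest: adj_in_V)
  have "ball2 u = insert u (?N \<union> ?M)"
    unfolding ball2_def by auto
  moreover have "u \<notin> ?N \<union> ?M" "?N \<inter> ?M = {}" using adj_sides by blast+
  moreover have "card ?M = Suc s * s"
  proof -
    have "card ?M = (\<Sum>w\<in>?N. card ({x. E w x} - {u}))"
    proof (rule card_UN_disjoint)
      show "\<forall>i\<in>?N. \<forall>j\<in>?N. i \<noteq> j \<longrightarrow> ({x. E i x} - {u}) \<inter> ({x. E j x} - {u}) = {}"
        using common_nbr_unique by blast
    qed (use finite_nbrs in auto)
    also have "\<dots> = (\<Sum>w\<in>?N. s)"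
    proof (rule sum.cong)
      fix w assume "w \<in> ?N"
      then have "E w u" "w \<in> V" using adj_sym adj_in_V by auto
      then show "card ({x. E w x} - {u}) = s" using degree finite_nbrs by (simp add: card_Diff_singleton)
    qed simp
    finally show ?thesis using degree[OF u] by simp
  qed
  ultimately show ?thesis using finite_nbrs degree[OF u]
    by (simp add: card_Un_disjoint power2_eq_square)
qed

lemma distance_3_path:
  assumes u: "u \<in> V" and d: "gdist V E u v = 3"
  obtains x y where "E u x" "E x y" "E y v" and "v \<notin> ball2 u"
proof -
  have far: "v \<notin> ball2 u"
    using d closed_nbhd_2[OF u] ball2_subset_V[OF u] by (force simp: closed_nbhd_def numeral_eq_enat)
  obtain n where n: "n \<le> 3" "walk V E n u v"
    using d gdist_le_iff[of V E u v 3] by (auto simp: numeral_eq_enat)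
  have "v \<in> V" using n(2) by (cases rule: walk.cases) auto
  then have "\<not> n \<le> 2"
    using n(2) far closed_nbhd_2[OF u] gdist_le_iff[of V E u v 2]
    by (auto simp: closed_nbhd_def numeral_eq_enat)
  then have "walk V E 3 u v" using n by (simp add: numeral_3_eq_3 le_Suc_eq)
  then show thesis using that far by (auto simp: numeral_3_eq_3 walk_Suc_iff walk_0_iff)
qed

lemma path3_ends: "E u x \<Longrightarrow> E x y \<Longrightarrow> E y v \<Longrightarrow> side u \<noteq> side v"
  using adj_sides by metis

(* Two balls around vertices at distance 3 meet exactly in the inner vertices of the
   connecting path, by uniqueness of paths of length 3. *)
lemma ball2_inter:
  assumes path: "E \<alpha> x" "E x y" "E y \<beta>" and far: "\<beta> \<notin> ball2 \<alpha>"
  shows "ball2 \<alpha> \<inter> ball2 \<beta> = {x, y}"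
proof
  have nadj: "\<not> E \<alpha> \<beta>" using far unfolding ball2_def by blast
  have sides: "side \<alpha> \<noteq> side \<beta>" using path3_ends[OF path] .
  show "{x, y} \<subseteq> ball2 \<alpha> \<inter> ball2 \<beta>"
    using path unfolding ball2_def by (auto intro: adj_sym)
  show "ball2 \<alpha> \<inter> ball2 \<beta> \<subseteq> {x, y}"
  proof
    fix z assume z: "z \<in> ball2 \<alpha> \<inter> ball2 \<beta>"
    have "z \<noteq> \<alpha>" "z \<noteq> \<beta>" using z far ball2_sym by auto
    show "z \<in> {x, y}"
    proof (cases "side z = side \<alpha>")
      case True
      then obtain w where "E \<alpha> w" "E w z" using z ball2_same_side \<open>z \<noteq> \<alpha>\<close> by blast
      moreover have "E \<beta> z" using z True sides ball2_other_side by auto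
      ultimately have "y = z" using path3_unique[OF path] adj_sym nadj by blast
      then show ?thesis by simp
    next
      case False
      then have "side z = side \<beta>" using sides by auto
      then obtain m where "E \<beta> m" "E m z" using z ball2_same_side \<open>z \<noteq> \<beta>\<close> by blast
      moreover have "E \<alpha> z" using z False ball2_other_side by auto
      ultimately have "x = z" using path3_unique[OF path] adj_sym nadj by blast
      then show ?thesis by simp
    qed
  qed
qed

(* The domination step: a vertex z outside both balls, on the side of a, has exactly one
   neighbour in their union, namely the first vertex of its unique 3-path to b.  None of its
   neighbours can lie in the ball of a, since z would then be at distance 2 from a. *)
lemma unique_nbr_in_balls:
  assumes b: "b \<in> V" and sides: "side a \<noteq> side b" and nadj: "\<not> E a b"
    and z: "z \<in> V" "z \<notin> ball2 a" "z \<notin> ball2 b" and side_z: "side z = side a"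
  shows "card {w \<in> ball2 a \<union> ball2 b. E z w} = 1"
proof -
  have nadj_z: "\<not> E z b" using z(3) adj_sym unfolding ball2_def by blast
  moreover have "side z \<noteq> side b" using sides side_z by simp
  ultimately obtain w m where path: "E z w" "E w m" "E m b" using path3_exists z(1) b by blast
  have "{w' \<in> ball2 a \<union> ball2 b. E z w'} = {w}"
  proof (intro set_eqI iffI)
    fix w' assume "w' \<in> {w' \<in> ball2 a \<union> ball2 b. E z w'}"
    then have w': "w' \<in> ball2 a \<union> ball2 b" "E z w'" by auto
    have side_w': "side w' \<noteq> side a" "side w' = side b"
      using adj_sides[OF w'(2)] side_z sides by auto
    have "w' \<notin> ball2 a"
    proof
      assume "w' \<in> ball2 a"
      then have "E a w'" using ball2_other_side side_w' by blast
      then have "z \<in> ball2 a" using w'(2) adj_sym unfolding ball2_def by blast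
      then show False using z(2) by contradiction
    qed
    with w' have "w' \<in> ball2 b" by blast
    moreover have "w' \<noteq> b" using w'(2) nadj_z by blast
    ultimately obtain m' where "E b m'" "E m' w'" using ball2_same_side side_w' by blast
    then show "w' \<in> {w}" using path3_unique[OF path w'(2) _ _ nadj_z] adj_sym by blast
  next
    fix w' assume "w' \<in> {w}"
    then show "w' \<in> {w' \<in> ball2 a \<union> ball2 b. E z w'}"
      using path adj_sym unfolding ball2_def by blast
  qed
  then show ?thesis by simp
qed

theorem distance_3_perfect_dominating:
  assumes \<alpha>: "\<alpha> \<in> V" and \<beta>: "\<beta> \<in> V" and d: "gdist V E \<alpha> \<beta> = 3"
  shows "perfect_dominating V E (closed_nbhd V E 2 \<alpha> \<union> closed_nbhd V E 2 \<beta>)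
       \<and> card (closed_nbhd V E 2 \<alpha> \<union> closed_nbhd V E 2 \<beta>) = 2 * (Suc s)\<^sup>2"
proof -
  obtain x y where path: "E \<alpha> x" "E x y" "E y \<beta>" and far: "\<beta> \<notin> ball2 \<alpha>"
    using distance_3_path[OF \<alpha> d] .
  have sides: "side \<alpha> \<noteq> side \<beta>" using path3_ends[OF path] .
  have nadj: "\<not> E \<alpha> \<beta>" "\<not> E \<beta> \<alpha>" using far adj_sym unfolding ball2_def by blast+
  have "x \<noteq> y" using adj_sides[OF path(2)] by auto
  then have "card (ball2 \<alpha> \<inter> ball2 \<beta>) = 2" using ball2_inter[OF path far] by simp
  then have card: "card (ball2 \<alpha> \<union> ball2 \<beta>) = 2 * (Suc s)\<^sup>2"
    using card_Un_Int[OF finite_ball2[OF \<alpha>] finite_ball2[OF \<beta>]] card_ball2[OF \<alpha>] card_ball2[OF \<beta>]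
    by simp
  have "card {w \<in> ball2 \<alpha> \<union> ball2 \<beta>. E z w} = 1" if z: "z \<in> V - (ball2 \<alpha> \<union> ball2 \<beta>)" for z
  proof (cases "side z = side \<alpha>")
    case True
    then show ?thesis using unique_nbr_in_balls[OF \<beta> sides nadj(1)] z by blast
  next
    case False
    then have "side z = side \<beta>" using sides by auto
    then show ?thesis using unique_nbr_in_balls[OF \<alpha> _ nadj(2)] sides z by (auto simp: Un_commute)
  qed
  then have "perfect_dominating V E (ball2 \<alpha> \<union> ball2 \<beta>)"
    unfolding perfect_dominating_def using ball2_subset_V \<alpha> \<beta> by blast
  with card show ?thesis using closed_nbhd_2[OF \<alpha>] closed_nbhd_2[OF \<beta>] by simp
qed

end

(* Labels of Gamma_q, classified by their number of coordinates equal to the formal symbol q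
   (encoded as None). *)
lemma labels_cases [consumes 1, case_names inf0 inf1 inf2 inf3]:
  assumes "l \<in> labels"
  obtains x y z where "l = (Some x, Some y, Some z)"
    | y z where "l = (None, Some y, Some z)"
    | z where "l = (None, None, Some z)"
    | "l = (None, None, None)"
proof -
  have "(\<exists>x y z. l = (Some x, Some y, Some z)) \<or> (\<exists>y z. l = (None, Some y, Some z))
      \<or> (\<exists>z. l = (None, None, Some z)) \<or> l = (None, None, None)"
    using assms unfolding labels_def by (cases l) auto
  then show thesis using that by blast
qed

lemma labels_memI [simp]:
  "(a, Some b, Some c) \<in> labels" "(None, b', Some c) \<in> labels" "(None, None, d) \<in> labels"
  unfolding labels_def by (cases b'; auto)+

lemma N1_subset_labels: "N1 l \<subseteq> labels"
  unfolding N1_def by (auto split: option.splits)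

lemma N1_inf0: "N1 (Some a, Some b, Some c) =
    insert (None, Some a, Some c) (range (\<lambda>x. (Some x, Some (a*x+b), Some (a^2*x+2*a*b+c))))"
  by (auto simp: N1_def)

lemma N1_inf1: "N1 (None, Some b, Some c) = insert (None, None, Some c) (range (\<lambda>x. (Some c, Some b, Some x)))"
  by (auto simp: N1_def)

lemma N1_inf2: "N1 (None, None, Some a) = insert (None, None, None) (range (\<lambda>x. (None, Some a, Some x)))"
  by (auto simp: N1_def)

lemma N1_inf3: "N1 (None, None, None) = insert (None, None, None) (range (\<lambda>x. (None, None, Some x)))"
  by (auto simp: N1_def)

lemma affine_incidence:
  "u = a*t+b \<Longrightarrow> v = a^2*t+2*a*b+c \<Longrightarrow> (Some t, Some u, Some v) \<in> N1 (Some a, Some b, Some c)"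
  by (simp add: N1_def)

lemma affine_point_on_line:
  "(Some x, Some y, Some z) \<in> N1 (Some a, Some (y - a*x), Some (z + a^2*x - 2*a*(y::'a::{finite,field})))"
  by (rule affine_incidence) (simp_all add: algebra_simps power2_eq_square)

definition N0 :: "('a::{finite,field}) label \<Rightarrow> 'a label set" where
  "N0 p = {l \<in> labels. p \<in> N1 l}"

lemma N0_inf0: "N0 (Some x, Some y, Some z) = insert (None, Some y, Some x)
    (range (\<lambda>a. (Some a, Some (y - a*x), Some (z + a^2*x - 2*a*(y::'a::{finite,field})))))"
proof (intro set_eqI iffI)
  fix l assume "l \<in> N0 (Some x, Some y, Some z)"
  then have l: "l \<in> labels" "(Some x, Some y, Some z) \<in> N1 l" unfolding N0_def by auto
  from l(1) show "l \<in> insert (None, Some y, Some x)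
      (range (\<lambda>a. (Some a, Some (y - a*x), Some (z + a^2*x - 2*a*y))))"
  proof (cases rule: labels_cases)
    case (inf0 a b c)
    then have "y = a*x+b" "z = a^2*x+2*a*b+c" using l(2) by (auto simp: N1_def)
    then have "b = y - a*x" "c = z + a^2*x - 2*a*y" by (auto simp: algebra_simps power2_eq_square)
    then show ?thesis using inf0 by auto
  qed (use l(2) in \<open>auto simp: N1_def\<close>)
qed (auto simp: N0_def N1_def algebra_simps power2_eq_square)

lemma N0_inf1: "N0 (None, Some y, Some z) = insert (None, None, Some y) (range (\<lambda>b. (Some y, Some b, Some (z::'a::{finite,field}))))"
  unfolding N0_def labels_def by (auto simp: N1_def split: option.splits)

lemma N0_inf2: "N0 (None, None, Some z) = insert (None, None, None) (range (\<lambda>b. (None, Some b, Some (z::'a::{finite,field}))))"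
  unfolding N0_def labels_def by (auto simp: N1_def split: option.splits)

lemma N0_inf3: "N0 (None, None, None) = insert (None, None, None) (range (\<lambda>a. (None, None, Some (a::'a::{finite,field}))))"
  unfolding N0_def labels_def by (auto simp: N1_def image_iff split: option.splits)

lemma card_insert_range:
  fixes f :: "'a::finite \<Rightarrow> 'b"
  assumes "inj f" "s \<notin> range f"
  shows "card (insert s (range f)) = Suc CARD('a)"
  using assms by (simp add: card_image)

lemma card_N1:
  fixes l :: "('a::{finite,field}) label"
  assumes "l \<in> labels"
  shows "card (N1 l) = Suc CARD('a)"
  using assms by (cases rule: labels_cases)
    (simp_all only: N1_inf0 N1_inf1 N1_inf2 N1_inf3, (rule card_insert_range; auto simp: inj_def)+)

lemma card_N0:
  fixes p :: "('a::{finite,field}) label"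
  assumes "p \<in> labels"
  shows "card (N0 p) = Suc CARD('a)"
  using assms by (cases rule: labels_cases)
    (simp_all only: N0_inf0 N0_inf1 N0_inf2 N0_inf3, (rule card_insert_range; auto simp: inj_def)+)

lemma card_labels:
  "card (labels :: ('a::{finite,field}) label set) = Suc CARD('a) * CARD('a)\<^sup>2 + Suc CARD('a)"
proof -
  let ?affine = "(\<lambda>(a, b, c). (a, Some b, Some c) :: 'a label) ` (UNIV \<times> UNIV \<times> UNIV)"
  let ?axis = "(\<lambda>a. (None, None, a) :: 'a label) ` UNIV"
  have split_labels: "labels = ?affine \<union> ?axis"
    unfolding labels_def by (auto simp: image_iff)
  have "card ?affine = Suc CARD('a) * CARD('a)\<^sup>2"
    by (subst card_image) (auto simp: inj_on_def card_UNIV_option power2_eq_square)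
  moreover have "card ?axis = Suc CARD('a)"
    by (subst card_image) (auto simp: inj_on_def card_UNIV_option)
  moreover have "?affine \<inter> ?axis = {}" by auto
  ultimately show ?thesis unfolding split_labels by (simp add: card_Un_disjoint)
qed

(* Two distinct affine lines share at most one point: a common point solves a linear
   equation in its first coordinate. *)
lemma affine_lines_meet:
  fixes a b c a' b' c' :: "'a::{finite,field}"
  assumes ne: "(a, b, c) \<noteq> (a', b', c')"
    and p1: "p1 \<in> N1 (Some a, Some b, Some c)" "p1 \<in> N1 (Some a', Some b', Some c')"
    and p2: "p2 \<in> N1 (Some a, Some b, Some c)" "p2 \<in> N1 (Some a', Some b', Some c')"
  shows "p1 = p2"
proof (cases "a = a'")
  case True
  have False if on: "p \<in> N1 (Some a, Some b, Some c)" "p \<in> N1 (Some a', Some b', Some c')"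
      and "p \<noteq> (None, Some a, Some c)" for p
  proof -
    obtain x where x: "p = (Some x, Some (a*x+b), Some (a^2*x+2*a*b+c))"
      using on(1) \<open>p \<noteq> _\<close> unfolding N1_inf0 by auto
    have "a*x+b = a'*x+b'" "a^2*x+2*a*b+c = a'^2*x+2*a'*b'+c'"
      using on(2) x unfolding N1_inf0 by auto
    then show False using ne True by simp
  qed
  then show ?thesis using p1 p2 by blast
next
  case False
  have affine: "\<exists>x. p = (Some x, Some (a*x+b), Some (a^2*x+2*a*b+c)) \<and> (a - a') * x = b' - b"
    if on: "p \<in> N1 (Some a, Some b, Some c)" "p \<in> N1 (Some a', Some b', Some c')" for p
  proof -
    obtain x where x: "p = (Some x, Some (a*x+b), Some (a^2*x+2*a*b+c))"
      using on False unfolding N1_inf0 by auto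
    have "a*x+b = a'*x+b'" using on(2) x unfolding N1_inf0 by auto
    then have "(a - a') * x = b' - b" by (simp add: algebra_simps)
    then show ?thesis using x by blast
  qed
  obtain x1 where x1: "p1 = (Some x1, Some (a*x1+b), Some (a^2*x1+2*a*b+c))" "(a - a') * x1 = b' - b"
    using affine p1 by blast
  obtain x2 where x2: "p2 = (Some x2, Some (a*x2+b), Some (a^2*x2+2*a*b+c))" "(a - a') * x2 = b' - b"
    using affine p2 by blast
  have "x1 = x2" using x1(2) x2(2) False by (metis mult_left_cancel right_minus_eq)
  then show ?thesis using x1 x2 by simp
qed

lemma lines_meet:
  fixes l l' :: "('a::{finite,field}) label"
  assumes l: "l \<in> labels" "l' \<in> labels" "l \<noteq> l'"
    and p: "p1 \<in> N1 l" "p1 \<in> N1 l'" "p2 \<in> N1 l" "p2 \<in> N1 l'"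
  shows "p1 = p2"
  using l(1)
proof (cases rule: labels_cases)
  case (inf0 a b c)
  from l(2) show ?thesis
  proof (cases rule: labels_cases)
    case (inf0 a' b' c')
    with \<open>l = _\<close> l(3) p show ?thesis by (intro affine_lines_meet[of a b c a' b' c']) auto
  qed (use p inf0 in \<open>auto simp: N1_inf0 N1_inf1 N1_inf2 N1_inf3\<close>)
next
  case (inf1 y z)
  from l(2) show ?thesis
    by (cases rule: labels_cases) (use p inf1 l in \<open>auto simp: N1_inf0 N1_inf1 N1_inf2 N1_inf3\<close>)
next
  case (inf2 z)
  from l(2) show ?thesis
    by (cases rule: labels_cases) (use p inf2 l in \<open>auto simp: N1_inf0 N1_inf1 N1_inf2 N1_inf3\<close>)
next
  case inf3
  from l(2) show ?thesis
    by (cases rule: labels_cases) (use p inf3 l in \<open>auto simp: N1_inf0 N1_inf1 N1_inf2 N1_inf3\<close>)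
qed

(* m is a line through p meeting the line l in the point p'; for p off l this is the
   unique 3-path from p to l in the quadrangle. *)
definition projection :: "('a::{finite,field}) label \<Rightarrow> 'a label \<Rightarrow> 'a label \<Rightarrow> 'a label \<Rightarrow> bool" where
  "projection p l m p' \<longleftrightarrow> m \<in> labels \<and> p \<in> N1 m \<and> p' \<in> N1 m \<and> p' \<in> N1 l"

lemma projectionI:
  "m \<in> labels \<Longrightarrow> p \<in> N1 m \<Longrightarrow> p' \<in> N1 m \<Longrightarrow> p' \<in> N1 l \<Longrightarrow> \<exists>m p'. projection p l m p'"
  unfolding projection_def by blast

(* The affine case reduces to solving
   (a' - a)(t - x) = d1 and (a' + a) d1 = d2 for the slope a' of the connecting line and the
   abscissa t of the foot point. *)
lemma projection_exists_affine_affine: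
  fixes x y z a b c :: "'a::{finite,field}"
  assumes off: "(Some x, Some y, Some z) \<notin> N1 (Some a, Some b, Some c)"
  shows "\<exists>m p'. projection (Some x, Some y, Some z) (Some a, Some b, Some c) m p'"
proof -
  define d1 where "d1 = a*x+b-y"
  define d2 where "d2 = a^2*x+2*a*b+c-z"
  consider "d1 = 0" | "d1 \<noteq> 0" "d2 = 2*a*d1" | "d1 \<noteq> 0" "d2 \<noteq> 2*a*d1" by blast
  then show ?thesis
  proof cases
    case 1
    then have "y = a*x+b" unfolding d1_def by simp
    then show ?thesis
      by (intro projectionI[of "(None, Some y, Some x)" _ "(Some x, Some y, Some (a^2*x+2*a*b+c))"])
        (auto simp: N1_def)
  next
    case 2
    then have "c = z+a^2*x-2*a*y" unfolding d1_def d2_def by algebra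
    then show ?thesis
      by (intro projectionI[of "(Some a, Some (y-a*x), Some (z+a^2*x-2*a*y))" _ "(None, Some a, Some c)"])
        (auto simp: N1_def algebra_simps power2_eq_square)
  next
    case 3
    define e where "e = d2 - 2*a*d1"
    have e: "e \<noteq> 0" using 3 unfolding e_def by simp
    define a' where "a' = a + e/d1"
    define t where "t = x + d1^2/e"
    have h1: "(a' - a)*(t - x) = d1" unfolding a'_def t_def using e 3
      by (simp add: field_simps power2_eq_square)
    have h2: "(a' + a)*d1 = d2" unfolding a'_def using 3 by (simp add: e_def field_simps)
    have "a*t+b = a'*t + (y - a'*x)" "a^2*t+2*a*b+c = a'^2*t + 2*a'*(y-a'*x) + (z + a'^2*x - 2*a'*y)"
      using h1 h2 unfolding d1_def d2_def by algebra+
    then show ?thesis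
      by (intro projectionI[of "(Some a', Some (y-a'*x), Some (z+a'^2*x-2*a'*y))" _
             "(Some t, Some (a*t+b), Some (a^2*t+2*a*b+c))"])
        (auto simp: affine_point_on_line intro!: affine_incidence)
  qed
qed

lemma projection_exists_affine_inf1:
  fixes x y z b c :: "'a::{finite,field}"
  shows "\<exists>m p'. projection (Some x, Some y, Some z) (None, Some b, Some c) m p'"
proof (cases "c = x")
  case True
  then show ?thesis
    by (intro projectionI[of "(None, Some y, Some x)" _ "(None, None, Some x)"]) (auto simp: N1_def)
next
  case False
  define a' where "a' = (b-y)/(c-x)"
  have "a'*(c-x) = b-y" unfolding a'_def using False by simp
  then have meet: "(Some c, Some b, Some (a'^2*(c-x)+z)) \<in> N1 (Some a', Some (y-a'*x), Some (z+a'^2*x-2*a'*y))"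
    by (intro affine_incidence) (algebra, simp add: algebra_simps power2_eq_square)
  show ?thesis
    by (intro projectionI[of "(Some a', Some (y-a'*x), Some (z+a'^2*x-2*a'*y))" _
          "(Some c, Some b, Some (a'^2*(c-x)+z))"])
      (simp, rule affine_point_on_line, rule meet, simp add: N1_def)
qed

lemma projection_exists_inf1_affine:
  fixes y z a b c :: "'a::{finite,field}"
  assumes off: "(None, Some y, Some z) \<notin> N1 (Some a, Some b, Some c)"
  shows "\<exists>m p'. projection (None, Some y, Some z) (Some a, Some b, Some c) m p'"
proof (cases "y = a")
  case True
  then show ?thesis
    by (intro projectionI[of "(None, None, Some y)" _ "(None, Some a, Some c)"]) (auto simp: N1_def)
next
  case False
  define d where "d = a - y"
  have d: "d \<noteq> 0" using False unfolding d_def by simp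
  define t where "t = -(2*b*d+c-z)/d^2"
  have "d^2*t = -(2*b*d+c-z)" unfolding t_def using d by simp
  then have "(Some t, Some (a*t+b), Some (a^2*t+2*a*b+c)) \<in> N1 (Some y, Some (d*t+b), Some z)"
    by (intro affine_incidence) (unfold d_def, algebra)+
  then show ?thesis
    by (intro projectionI[of "(Some y, Some (d*t+b), Some z)" _ "(Some t, Some (a*t+b), Some (a^2*t+2*a*b+c))"])
      (auto simp: N1_def)
qed

lemma projection_exists:
  fixes p l :: "('a::{finite,field}) label"
  assumes "p \<in> labels" "l \<in> labels" and off: "p \<notin> N1 l"
  shows "\<exists>m p'. projection p l m p'"
  using assms(1)
proof (cases rule: labels_cases)
  case p: (inf0 x y z)
  from assms(2) show ?thesis
  proof (cases rule: labels_cases)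
    case (inf0 a b c) then show ?thesis using projection_exists_affine_affine off p by blast
  next
    case (inf1 b c) then show ?thesis using projection_exists_affine_inf1 p by blast
  next
    case (inf2 a) then show ?thesis unfolding p
      by (intro projectionI[of "(Some a, Some (y-a*x), Some (z+a^2*x-2*a*y))" _
            "(None, Some a, Some (z+a^2*x-2*a*y))"])
        (simp, rule affine_point_on_line, simp_all add: N1_def)
  next
    case inf3 then show ?thesis unfolding p
      by (intro projectionI[of "(None, Some y, Some x)" _ "(None, None, Some x)"]) (auto simp: N1_def)
  qed
next
  case p: (inf1 y z)
  from assms(2) show ?thesis
  proof (cases rule: labels_cases)
    case (inf0 a b c) then show ?thesis using projection_exists_inf1_affine off p by blast
  next
    case (inf1 b c) then show ?thesis unfolding p
      by (intro projectionI[of "(Some y, Some (b - y*c), Some z)" _ "(Some c, Some b, Some (y^2*c+2*y*(b-y*c)+z))"])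
        (auto simp: N1_def)
  next
    case (inf2 a) then show ?thesis using off unfolding p
      by (intro projectionI[of "(None, None, Some y)" _ "(None, None, None)"]) (auto simp: N1_def)
  next
    case inf3 then show ?thesis unfolding p
      by (intro projectionI[of "(None, None, Some y)" _ "(None, None, None)"]) (auto simp: N1_def)
  qed
next
  case p: (inf2 z)
  from assms(2) show ?thesis
  proof (cases rule: labels_cases)
    case (inf0 a b c) then show ?thesis unfolding p
      by (intro projectionI[of "(None, Some (a*z+b), Some z)" _ "(Some z, Some (a*z+b), Some (a^2*z+2*a*b+c))"])
        (auto simp: N1_def)
  next
    case (inf1 b c) then show ?thesis using off unfolding p
      by (intro projectionI[of "(None, None, None)" _ "(None, None, Some c)"]) (auto simp: N1_def)
  next
    case (inf2 a) then show ?thesis unfolding p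
      by (intro projectionI[of "(None, None, None)" _ "(None, None, None)"]) (auto simp: N1_def)
  qed (use off p in \<open>auto simp: N1_def\<close>)
next
  case p: inf3
  from assms(2) show ?thesis
  proof (cases rule: labels_cases)
    case (inf0 a b c) then show ?thesis unfolding p
      by (intro projectionI[of "(None, None, Some a)" _ "(None, Some a, Some c)"]) (auto simp: N1_def)
  next
    case (inf1 b c) then show ?thesis unfolding p
      by (intro projectionI[of "(None, None, None)" _ "(None, None, Some c)"]) (auto simp: N1_def)
  qed (use off p in \<open>auto simp: N1_def\<close>)
qed

definition chains3 :: "('a::{finite,field}) label \<Rightarrow> ('a label \<times> 'a label \<times> 'a label) set" where
  "chains3 l = (SIGMA p':N1 l. SIGMA m:N0 p' - {l}. N1 m - {p'})"

(* There are (q+1) q^2 such chains, as many as points off l. *)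
lemma card_chains3:
  fixes l :: "('a::{finite,field}) label"
  assumes l: "l \<in> labels"
  shows "card (chains3 l) = Suc CARD('a) * CARD('a)\<^sup>2"
proof -
  have fan: "card (SIGMA m:N0 p' - {l}. N1 m - {p'}) = CARD('a)\<^sup>2" if p': "p' \<in> N1 l" for p'
  proof -
    have "p' \<in> labels" using p' N1_subset_labels by blast
    moreover have "l \<in> N0 p'" using p' l unfolding N0_def by simp
    ultimately have lines: "card (N0 p' - {l}) = CARD('a)" by (simp add: card_N0)
    have "card (SIGMA m:N0 p' - {l}. N1 m - {p'}) = (\<Sum>m\<in>N0 p' - {l}. card (N1 m - {p'}))"
      by (rule card_SigmaI) auto
    also have "\<dots> = (\<Sum>m\<in>N0 p' - {l}. CARD('a))"
      by (rule sum.cong) (auto simp: N0_def card_N1)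
    also have "\<dots> = CARD('a)\<^sup>2" using lines by (simp add: power2_eq_square)
    finally show ?thesis .
  qed
  have "card (chains3 l) = (\<Sum>p'\<in>N1 l. card (SIGMA m:N0 p' - {l}. N1 m - {p'}))"
    unfolding chains3_def by (rule card_SigmaI) auto
  also have "\<dots> = (\<Sum>p'\<in>N1 l. CARD('a)\<^sup>2)" using fan by simp
  finally show ?thesis using card_N1[OF l] by simp
qed

lemma chains3_ends:
  fixes l :: "('a::{finite,field}) label"
  assumes l: "l \<in> labels"
  shows "(\<lambda>(p', m, x). x) ` chains3 l = labels - N1 l"
proof (intro set_eqI iffI)
  fix x assume "x \<in> (\<lambda>(p', m, x). x) ` chains3 l"
  then obtain p' m where "(p', m, x) \<in> chains3 l" by auto
  then have chain: "p' \<in> N1 l" "m \<in> N0 p'" "m \<noteq> l" "x \<in> N1 m" "x \<noteq> p'"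
    unfolding chains3_def by auto
  then have m: "m \<in> labels" "p' \<in> N1 m" unfolding N0_def by auto
  have "x \<notin> N1 l" using lines_meet[OF m(1) l chain(3) chain(4) _ m(2) chain(1)] chain(5) by blast
  then show "x \<in> labels - N1 l" using chain(4) N1_subset_labels by blast
next
  fix x assume x: "x \<in> labels - N1 l"
  then obtain m p' where "projection x l m p'" using projection_exists l by blast
  then have "(p', m, x) \<in> chains3 l" using x unfolding chains3_def N0_def projection_def by auto
  then show "x \<in> (\<lambda>(p', m, x). x) ` chains3 l" by force
qed

(* Projections are unique: the end point map of chains is onto a set of the same size. *)
lemma projection_unique:
  fixes l :: "('a::{finite,field}) label"
  assumes l: "l \<in> labels" and off: "p \<notin> N1 l"
    and proj: "projection p l m1 p1" "projection p l m2 p2"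
  shows "m1 = m2 \<and> p1 = p2"
proof -
  have "card ((\<lambda>(p', m, x). x) ` chains3 l) = card (chains3 l)"
    using N1_subset_labels[of l] card_labels[where 'a='a] card_N1[OF l] card_chains3[OF l]
    by (simp add: chains3_ends[OF l] card_Diff_subset)
  then have inj: "inj_on (\<lambda>(p', m, x). x) (chains3 l)"
    unfolding chains3_def by (simp add: inj_on_iff_eq_card)
  have "(p1, m1, p) \<in> chains3 l" "(p2, m2, p) \<in> chains3 l"
    using proj off unfolding chains3_def N0_def projection_def by auto
  then show ?thesis using inj_onD[OF inj, of "(p1, m1, p)" "(p2, m2, p)"] by simp
qed

lemma gadj_sym: "gadj u v \<Longrightarrow> gadj v u"
  unfolding gadj_def by auto

lemma gadj_iff: "gadj u v \<longleftrightarrow>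
   (snd u \<and> \<not> snd v \<and> fst u \<in> labels \<and> fst v \<in> N1 (fst u)) \<or>
   (snd v \<and> \<not> snd u \<and> fst v \<in> labels \<and> fst u \<in> N1 (fst v))"
  unfolding gadj_def gverts_def using N1_subset_labels by (cases u; cases v) auto

lemma card_nbrs_Gamma:
  fixes u :: "('a::{finite,field}) gvertex"
  assumes "u \<in> gverts"
  shows "card {v. gadj u v} = Suc CARD('a)"
proof -
  obtain l b where u: "u = (l, b)" and l: "l \<in> labels" using assms unfolding gverts_def by auto
  show ?thesis
  proof (cases b)
    case True
    then have "{v. gadj u v} = (\<lambda>p. (p, False)) ` N1 l"
      by (auto simp: gadj_iff u l)
    then show ?thesis using card_N1[OF l] by (simp add: card_image inj_on_def)
  next
    case False
    then have "{v. gadj u v} = (\<lambda>m. (m, True)) ` N0 l"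
      by (auto simp: gadj_iff u l N0_def)
    then show ?thesis using card_N0[OF l] by (simp add: card_image inj_on_def)
  qed
qed

lemma common_nbr_Gamma:
  assumes "gadj u w" "gadj w v" "gadj u w'" "gadj w' v" "u \<noteq> v"
  shows "w = w'"
proof (cases "snd u")
  case True
  then have sides: "\<not> snd w" "\<not> snd w'" and "fst u \<in> labels" "fst v \<in> labels" "fst u \<noteq> fst v"
    "fst w \<in> N1 (fst u)" "fst w \<in> N1 (fst v)" "fst w' \<in> N1 (fst u)" "fst w' \<in> N1 (fst v)"
    using assms unfolding gadj_iff by (auto simp: prod_eq_iff)
  then have "fst w = fst w'" using lines_meet[of "fst u" "fst v"] by blast
  then show ?thesis using sides by (simp add: prod_eq_iff)
next
  case False
  then have sides: "snd w" "snd w'" and "fst w \<in> labels" "fst w' \<in> labels" "fst u \<noteq> fst v"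
    "fst u \<in> N1 (fst w)" "fst v \<in> N1 (fst w)" "fst u \<in> N1 (fst w')" "fst v \<in> N1 (fst w')"
    using assms unfolding gadj_iff by (auto simp: prod_eq_iff)
  then have "fst w = fst w'" using lines_meet by blast
  then show ?thesis using sides by (simp add: prod_eq_iff)
qed

lemma path3_point_line:
  "gadj (p, False) w \<and> gadj w m \<and> gadj m (l, True) \<longleftrightarrow>
     (\<exists>n p'. w = (n, True) \<and> m = (p', False) \<and> l \<in> labels \<and> projection p l n p')"
  by (cases w; cases m) (auto simp: gadj_iff projection_def)

lemma opposite_vertices_cases:
  assumes "snd u \<noteq> snd v"
  obtains p l where "u = (p, False)" "v = (l, True)"
        | p l where "u = (l, True)" "v = (p, False)"
  using assms by (cases u; cases v) auto

lemma path3_exists_Gamma: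
  fixes u v :: "('a::{finite,field}) gvertex"
  assumes "u \<in> gverts" "v \<in> gverts" "snd u \<noteq> snd v" "\<not> gadj u v"
  shows "\<exists>w m. gadj u w \<and> gadj w m \<and> gadj m v"
proof -
  have point_line: "\<exists>w m. gadj (p, False) w \<and> gadj w m \<and> gadj m (l, True)"
    if "(p, False) \<in> gverts" "(l, True) \<in> gverts" "\<not> gadj (p, False) (l, True)" for p l :: "'a label"
  proof -
    have "p \<in> labels" "l \<in> labels" "p \<notin> N1 l" using that by (auto simp: gverts_def gadj_iff)
    then obtain n p' where "projection p l n p'" using projection_exists by blast
    then show ?thesis using path3_point_line \<open>l \<in> labels\<close> by blast
  qed
  from assms(3) show ?thesis
  proof (cases rule: opposite_vertices_cases)
    case 1 then show ?thesis using point_line assms by blast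
  next
    case (2 p l)
    then obtain w m where "gadj (p, False) w" "gadj w m" "gadj m (l, True)"
      using point_line assms gadj_sym by blast
    then show ?thesis using 2 gadj_sym by blast
  qed
qed

lemma path3_unique_Gamma:
  assumes path: "gadj u w" "gadj w m" "gadj m v" and path': "gadj u w'" "gadj w' m'" "gadj m' v"
    and nadj: "\<not> gadj u v"
  shows "w = w' \<and> m = m'"
proof -
  have point_line: "w = w' \<and> m = m'"
    if paths: "gadj (p, False) w" "gadj w m" "gadj m (l, True)"
      "gadj (p, False) w'" "gadj w' m'" "gadj m' (l, True)"
      and off: "\<not> gadj (p, False) (l, True)" for p l w m w' m'
  proof -
    obtain n q n' q' where "w = (n, True)" "m = (q, False)" "w' = (n', True)" "m' = (q', False)"
      and l: "l \<in> labels" and "projection p l n q" "projection p l n' q'"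
      using paths path3_point_line by meson
    moreover have "p \<notin> N1 l" using off l by (simp add: gadj_iff)
    ultimately show ?thesis using projection_unique by blast
  qed
  have "snd u \<noteq> snd v" using path by (auto simp: gadj_def)
  then show ?thesis
  proof (cases rule: opposite_vertices_cases)
    case 1 then show ?thesis using point_line path path' nadj by blast
  next
    case 2 then show ?thesis using point_line[of _ m w _ m' w'] path path' nadj gadj_sym by blast
  qed
qed

lemma Gamma_gq_incidence_graph:
  "gq_incidence_graph (gverts :: ('a::{finite,field}) gvertex set) gadj snd CARD('a)"
proof
  show "finite (gverts :: 'a gvertex set)" by simp
  show "gadj u v \<Longrightarrow> u \<in> gverts \<and> v \<in> gverts" for u v :: "'a gvertex"
    unfolding gadj_def by simp
  show "gadj u v \<Longrightarrow> gadj v u" for u v :: "'a gvertex" by (rule gadj_sym)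
  show "gadj u v \<Longrightarrow> snd u \<noteq> snd v" for u v :: "'a gvertex"
    unfolding gadj_def by auto
qed (fact card_nbrs_Gamma common_nbr_Gamma path3_exists_Gamma path3_unique_Gamma)+

theorem theorem2:
  fixes \<alpha> \<beta> :: "('a::{finite,field}) gvertex"
  assumes "\<alpha> \<in> gverts" and "\<beta> \<in> gverts"
    and "gdist gverts gadj \<alpha> \<beta> = 3"
  shows "perfect_dominating gverts gadj
           (closed_nbhd gverts gadj 2 \<alpha> \<union> closed_nbhd gverts gadj 2 \<beta>)
       \<and> card (closed_nbhd gverts gadj 2 \<alpha> \<union> closed_nbhd gverts gadj 2 \<beta>)
           = 2 * (card (UNIV :: 'a set) + 1)^2"
  using gq_incidence_graph.distance_3_perfect_dominating[OF Gamma_gq_incidence_graph assms] by simp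

end
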